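(* Let $\Gamma=(V,E)$ be a graph. If for each $v\in V$ the monoid $M_v$ is embeddable in a group $G_v$, then the graph product $\Gamma_{v\in V}M_v$ is embeddable in the group $\Gamma_{v\in V}G_v$.
   Context: A graph $\Gamma=(V,E)$ has vertex set $V$ and irreflexive symmetric edge relation $E$. The graph product $\Gamma_{v\in V}M_v$ of pairwise disjoint monoids $M_v$ is the quotient of their free product by the congruence generated by all pairs $(mn,nm)$ with $m\in M_u$, $n\in M_v$, $(u,v)\in E$ (for groups this is the usual graph product of groups). *)

theory Defs
  imports "HOL-Algebra.Group"
begin

definition monoid_embedding :: "('a, 'c) monoid_scheme \<Rightarrow> ('b, 'd) monoid_scheme \<Rightarrow> ('a \<Rightarrow> 'b) \<Rightarrow> bool" where
  "monoid_embedding M N f \<longleftrightarrow> f \<in> mon M N \<and> f \<one>\<^bsub>M\<^esub> = \<one>\<^bsub>N\<^esub>"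

definition embeddable :: "('a, 'c) monoid_scheme \<Rightarrow> ('b, 'd) monoid_scheme \<Rightarrow> bool" where
  "embeddable M N \<longleftrightarrow> (\<exists>f. monoid_embedding M N f)"

definition gp_words :: "('v \<Rightarrow> ('a, 'c) monoid_scheme) \<Rightarrow> ('v \<times> 'a) list set" where
  "gp_words M = {w. \<forall>(v, m) \<in> set w. m \<in> carrier (M v)}"

inductive gp_eq :: "('v \<Rightarrow> 'v \<Rightarrow> bool) \<Rightarrow> ('v \<Rightarrow> ('a, 'c) monoid_scheme)
    \<Rightarrow> ('v \<times> 'a) list \<Rightarrow> ('v \<times> 'a) list \<Rightarrow> bool"
  for E M where
  gp_refl: "gp_eq E M w w"
| gp_sym: "gp_eq E M w w' \<Longrightarrow> gp_eq E M w' w"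
| gp_trans: "gp_eq E M w w' \<Longrightarrow> gp_eq E M w' w'' \<Longrightarrow> gp_eq E M w w''"
| gp_ctxt: "gp_eq E M w w' \<Longrightarrow> gp_eq E M (a @ w @ b) (a @ w' @ b)"
| gp_unit: "gp_eq E M [(v, \<one>\<^bsub>M v\<^esub>)] []"
| gp_mult: "m \<in> carrier (M v) \<Longrightarrow> n \<in> carrier (M v) \<Longrightarrow>
      gp_eq E M [(v, m), (v, n)] [(v, m \<otimes>\<^bsub>M v\<^esub> n)]"
| gp_comm: "E u v \<Longrightarrow> m \<in> carrier (M u) \<Longrightarrow> n \<in> carrier (M v) \<Longrightarrow>
      gp_eq E M [(u, m), (v, n)] [(v, n), (u, m)]"

definition gp_class :: "('v \<Rightarrow> 'v \<Rightarrow> bool) \<Rightarrow> ('v \<Rightarrow> ('a, 'c) monoid_scheme)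
    \<Rightarrow> ('v \<times> 'a) list \<Rightarrow> ('v \<times> 'a) list set" where
  "gp_class E M w = {w'. gp_eq E M w w'}"

definition graph_product :: "('v \<Rightarrow> 'v \<Rightarrow> bool) \<Rightarrow> ('v \<Rightarrow> ('a, 'c) monoid_scheme)
    \<Rightarrow> ('v \<times> 'a) list set monoid" where
  "graph_product E M =
    \<lparr>carrier = gp_class E M ` gp_words M,
     mult = (\<lambda>X Y. gp_class E M ((SOME x. x \<in> X \<inter> gp_words M) @ (SOME y. y \<in> Y \<inter> gp_words M))),
     one = gp_class E M []\<rparr>"

end

theory Submission
  imports Defs
begin

text \<open>Two words are trace equivalent if their projections onto every pair of non-adjacent
  vertices agree. Call a word reduced if it contains no unit letters and no trace-equivalent
  word has two neighbouring letters at the same vertex. Every element of the graph product is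
  represented by a reduced word, and two reduced words representing the same element are trace
  equivalent: words act on reduced words (a letter at \<open>v\<close> is multiplied into the \<open>v\<close>-letter that
  can be commuted to the front, if any), the action respects the defining relations, and a
  reduced word acting on the empty word gives back itself. Applying injective homomorphisms
  letterwise sends reduced words to reduced words and reflects trace equivalence, hence induces
  an injective homomorphism of graph products.\<close>

section \<open>Trace equivalence\<close>

definition vertex_proj :: "'v \<Rightarrow> 'v \<Rightarrow> ('v \<times> 'a) list \<Rightarrow> ('v \<times> 'a) list" where
  "vertex_proj x y = filter (\<lambda>l. fst l = x \<or> fst l = y)"

text \<open>By the projection lemma for free partially commutative monoids, this is equality modulo
  commuting neighbouring letters at adjacent vertices; only the direction proved in
  \<open>trace_eq_imp_gp_eq\<close> is needed.\<close>

definition trace_eq :: "('v \<Rightarrow> 'v \<Rightarrow> bool) \<Rightarrow> ('v \<times> 'a) list \<Rightarrow> ('v \<times> 'a) list \<Rightarrow> bool" where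
  "trace_eq E u w \<longleftrightarrow> (\<forall>x y. x = y \<or> \<not> E x y \<longrightarrow> vertex_proj x y u = vertex_proj x y w)"

definition all_adjacent :: "('v \<Rightarrow> 'v \<Rightarrow> bool) \<Rightarrow> 'v \<Rightarrow> ('v \<times> 'a) list \<Rightarrow> bool" where
  "all_adjacent E v p \<longleftrightarrow> (\<forall>l \<in> set p. fst l \<noteq> v \<and> E (fst l) v)"

lemma trace_eq_refl [simp]: "trace_eq E w w"
  by (simp add: trace_eq_def)

lemma trace_eq_sym: "trace_eq E u w \<Longrightarrow> trace_eq E w u"
  by (simp add: trace_eq_def)

lemma trace_eq_trans [trans]: "trace_eq E u w \<Longrightarrow> trace_eq E w z \<Longrightarrow> trace_eq E u z"
  by (simp add: trace_eq_def)

lemma trace_eq_append_context: "trace_eq E u w \<Longrightarrow> trace_eq E (a @ u @ b) (a @ w @ b)"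
  by (simp add: trace_eq_def vertex_proj_def)

lemma trace_eq_Cons: "trace_eq E u w \<Longrightarrow> trace_eq E (l # u) (l # w)"
  using trace_eq_append_context[of E u w "[l]" "[]"] by simp

lemma trace_eq_Cons_cancel: "trace_eq E (l # u) (l # w) \<Longrightarrow> trace_eq E u w"
  unfolding trace_eq_def
proof (intro allI impI)
  fix x y
  assume "\<forall>x y. x = y \<or> \<not> E x y \<longrightarrow> vertex_proj x y (l # u) = vertex_proj x y (l # w)"
    and "x = y \<or> \<not> E x y"
  then have "vertex_proj x y (l # u) = vertex_proj x y (l # w)"
    by blast
  then show "vertex_proj x y u = vertex_proj x y w"
    by (simp add: vertex_proj_def split: if_splits)
qed

lemma trace_eq_Nil:
  assumes "trace_eq E [] w"
  shows "w = []"
proof (cases w)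
  case (Cons l w')
  from assms have "vertex_proj (fst l) (fst l) [] = vertex_proj (fst l) (fst l) w"
    unfolding trace_eq_def by blast
  with Cons show ?thesis
    by (simp add: vertex_proj_def)
qed

lemma trace_eq_same_head:
  assumes "trace_eq E x ((v, h) # y)" and "trace_eq E x ((v, h') # y')"
  shows "h = h'" and "trace_eq E y y'"
proof -
  have heads: "trace_eq E ((v, h) # y) ((v, h') # y')"
    using assms trace_eq_sym trace_eq_trans by blast
  then have "vertex_proj v v ((v, h) # y) = vertex_proj v v ((v, h') # y')"
    by (simp add: trace_eq_def)
  then show "h = h'"
    by (simp add: vertex_proj_def)
  with heads show "trace_eq E y y'"
    using trace_eq_Cons_cancel by blast
qed

locale sym_graph =
  fixes E :: "'v \<Rightarrow> 'v \<Rightarrow> bool"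
  assumes adjacent_sym: "E u v \<Longrightarrow> E v u"
begin

lemma vertex_proj_all_adjacent:
  assumes "all_adjacent E v p" "v = x \<or> v = y" "x = y \<or> \<not> E x y"
  shows "vertex_proj x y p = []"
  using assms by (auto simp: all_adjacent_def vertex_proj_def filter_empty_conv dest: adjacent_sym)

lemma trace_eq_move_front:
  assumes "all_adjacent E (fst l) p"
  shows "trace_eq E (p @ l # q) (l # p @ q)"
  unfolding trace_eq_def
proof (intro allI impI)
  fix x y assume nonadj: "x = y \<or> \<not> E x y"
  show "vertex_proj x y (p @ l # q) = vertex_proj x y (l # p @ q)"
  proof (cases "fst l = x \<or> fst l = y")
    case True
    then have "vertex_proj x y p = []"
      using vertex_proj_all_adjacent[OF assms _ nonadj] by blast
    with True show ?thesis
      by (simp add: vertex_proj_def)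
  qed (simp add: vertex_proj_def)
qed

lemma trace_eq_ConsE:
  assumes tr: "trace_eq E (l # u) w"
  obtains p q where "w = p @ l # q" "all_adjacent E (fst l) p" "trace_eq E u (p @ q)"
proof -
  let ?v = "fst l"
  have "vertex_proj ?v ?v (l # u) = vertex_proj ?v ?v w"
    using tr unfolding trace_eq_def by blast
  then have proj_v: "l # vertex_proj ?v ?v u = vertex_proj ?v ?v w"
    by (simp add: vertex_proj_def)
  then have "filter (\<lambda>a. fst a = ?v \<or> fst a = ?v) w \<noteq> []"
    unfolding vertex_proj_def by (metis list.distinct(1))
  then have "\<exists>a \<in> set w. fst a = ?v"
    unfolding filter_empty_conv by blast
  then obtain p l' q where w: "w = p @ l' # q" "fst l' = ?v" and p: "\<forall>a \<in> set p. fst a \<noteq> ?v"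
    using split_list_first_prop[of w "\<lambda>a. fst a = ?v"] by blast
  have "vertex_proj ?v ?v p = []"
    using p by (simp add: vertex_proj_def filter_empty_conv)
  with proj_v w have l': "l' = l"
    by (simp add: vertex_proj_def)
  have adj: "all_adjacent E ?v p"
    unfolding all_adjacent_def
  proof
    fix a assume "a \<in> set p"
    then obtain p1 p2 where p12: "p = p1 @ a # p2"
      by (meson split_list)
    have ne: "fst a \<noteq> ?v"
      using p \<open>a \<in> set p\<close> by blast
    moreover have "E (fst a) ?v"
    proof (rule ccontr)
      \<comment> \<open>otherwise \<open>a\<close> would precede \<open>l\<close> in the projection onto \<open>fst a\<close> and \<open>?v\<close>\<close>
      assume "\<not> E (fst a) ?v"
      then have "vertex_proj (fst a) ?v (l # u) = vertex_proj (fst a) ?v w"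
        using tr by (simp add: trace_eq_def)
      then have "l # vertex_proj (fst a) ?v u
          = vertex_proj (fst a) ?v p1 @ a # vertex_proj (fst a) ?v (p2 @ l' # q)"
        using w p12 by (simp add: vertex_proj_def)
      moreover have "\<forall>b \<in> set (vertex_proj (fst a) ?v p1). fst b \<noteq> ?v"
        using p p12 by (auto simp: vertex_proj_def)
      ultimately show False
        using ne by (cases "vertex_proj (fst a) ?v p1") auto
    qed
    ultimately show "fst a \<noteq> ?v \<and> E (fst a) ?v" ..
  qed
  have "trace_eq E (l # u) (l # p @ q)"
    using trace_eq_trans[OF tr] trace_eq_move_front[OF adj] w l' by simp
  then have "trace_eq E u (p @ q)"
    by (rule trace_eq_Cons_cancel)
  with that w l' adj show ?thesis
    by blast
qed

lemma trace_eq_set_length: "trace_eq E u w \<Longrightarrow> set u = set w \<and> length u = length w"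
proof (induction u arbitrary: w)
  case Nil
  then show ?case
    using trace_eq_Nil by fastforce
next
  case (Cons l u)
  then obtain p q where "w = p @ l # q" "trace_eq E u (p @ q)"
    by (auto elim: trace_eq_ConsE)
  with Cons.IH show ?case
    by auto
qed

lemma trace_eq_set: "trace_eq E u w \<Longrightarrow> set u = set w"
  using trace_eq_set_length by blast

lemma trace_eq_length: "trace_eq E u w \<Longrightarrow> length u = length w"
  using trace_eq_set_length by blast

lemma trace_eq_map_lift:
  assumes fst_g: "\<And>l. fst (g l) = fst l" and "trace_eq E (map g r) w"
  shows "\<exists>s. w = map g s \<and> trace_eq E r s"
  using assms(2)
proof (induction r arbitrary: w)
  case Nil
  then show ?case
    using trace_eq_Nil by fastforce
next
  case (Cons l r)
  from Cons.prems obtain p q where w: "w = p @ g l # q" and adj: "all_adjacent E (fst l) p"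
      and pq: "trace_eq E (map g r) (p @ q)"
    by (auto simp: fst_g elim: trace_eq_ConsE)
  obtain s where s: "p @ q = map g s" "trace_eq E r s"
    using Cons.IH[OF pq] by blast
  then obtain s1 s2 where s12: "s = s1 @ s2" "p = map g s1" "q = map g s2"
    by (metis map_eq_append_conv)
  have "all_adjacent E (fst l) s1"
    using adj s12(2) fst_g by (auto simp: all_adjacent_def)
  have "trace_eq E (l # r) (l # s1 @ s2)"
    using trace_eq_Cons s(2) s12(1) by blast
  also have "trace_eq E (l # s1 @ s2) (s1 @ l # s2)"
    using trace_eq_move_front[OF \<open>all_adjacent E (fst l) s1\<close>] trace_eq_sym by blast
  finally have "trace_eq E (l # r) (s1 @ l # s2)" .
  with w s12 show ?case
    by (intro exI[of _ "s1 @ l # s2"]) simp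
qed

end

section \<open>Words and the defining congruence\<close>

declare gp_trans [trans]

lemma gp_words_iff: "w \<in> gp_words M \<longleftrightarrow> (\<forall>l \<in> set w. snd l \<in> carrier (M (fst l)))"
  by (auto simp: gp_words_def)

lemma gp_eq_Cons: "gp_eq E M w w' \<Longrightarrow> gp_eq E M (l # w) (l # w')"
  using gp_ctxt[of E M w w' "[l]" "[]"] by simp

lemma gp_eq_append: "gp_eq E M a a' \<Longrightarrow> gp_eq E M b b' \<Longrightarrow> gp_eq E M (a @ b) (a' @ b')"
  using gp_ctxt[of E M a a' "[]" b] gp_ctxt[of E M b b' a' "[]"] gp_trans by fastforce

lemma gp_eq_move_front:
  assumes "\<forall>l \<in> set p. E (fst l) v" "p \<in> gp_words M" "m \<in> carrier (M v)"
  shows "gp_eq E M (p @ (v, m) # q) ((v, m) # p @ q)"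
  using assms
proof (induction p)
  case Nil
  then show ?case
    by (simp add: gp_refl)
next
  case (Cons a p)
  obtain x k where a: "a = (x, k)"
    by fastforce
  have "gp_eq E M (a # p @ (v, m) # q) (a # (v, m) # p @ q)"
    using Cons by (intro gp_eq_Cons) (simp add: gp_words_iff)
  also have "gp_eq E M (a # (v, m) # p @ q) ((v, m) # a # p @ q)"
  proof -
    have "gp_eq E M [(x, k), (v, m)] [(v, m), (x, k)]"
      using Cons.prems a by (intro gp_comm) (auto simp: gp_words_iff)
    from gp_ctxt[OF this, of "[]" "p @ q"] a show ?thesis
      by simp
  qed
  finally show ?case
    by simp
qed

lemma (in sym_graph) trace_eq_imp_gp_eq:
  "w \<in> gp_words M \<Longrightarrow> trace_eq E w w' \<Longrightarrow> gp_eq E M w w'"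
proof (induction w arbitrary: w')
  case Nil
  then show ?case
    using trace_eq_Nil gp_refl by blast
next
  case (Cons l u)
  from Cons.prems(2) obtain p q where w': "w' = p @ l # q"
      and adj: "all_adjacent E (fst l) p" and tr: "trace_eq E u (p @ q)"
    by (rule trace_eq_ConsE)
  have words: "u \<in> gp_words M" "p \<in> gp_words M" "snd l \<in> carrier (M (fst l))"
    using Cons.prems trace_eq_set[OF Cons.prems(2)] w' by (auto simp: gp_words_iff)
  have "gp_eq E M (l # u) (l # p @ q)"
    using Cons.IH[OF words(1) tr] by (rule gp_eq_Cons)
  also have "gp_eq E M (l # p @ q) (p @ l # q)"
  proof -
    have "gp_eq E M (p @ (fst l, snd l) # q) ((fst l, snd l) # p @ q)"
      using adj words by (intro gp_eq_move_front) (auto simp: all_adjacent_def)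
    then show ?thesis
      by (simp add: gp_sym)
  qed
  finally show ?case
    using w' by simp
qed

lemma gp_class_eq_iff: "gp_class E M w = gp_class E M w' \<longleftrightarrow> gp_eq E M w w'"
proof
  assume "gp_class E M w = gp_class E M w'"
  then show "gp_eq E M w w'"
    using gp_refl[of E M w'] by (auto simp: gp_class_def)
next
  assume eq: "gp_eq E M w w'"
  show "gp_class E M w = gp_class E M w'"
    unfolding gp_class_def using gp_trans[OF gp_sym[OF eq]] gp_trans[OF eq] by blast
qed

lemma some_in_gp_class:
  assumes "w \<in> gp_words M"
  shows "(SOME x. x \<in> gp_class E M w \<inter> gp_words M) \<in> gp_words M"
    and "gp_eq E M w (SOME x. x \<in> gp_class E M w \<inter> gp_words M)"
proof -
  have "w \<in> gp_class E M w \<inter> gp_words M"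
    using assms gp_refl by (simp add: gp_class_def)
  then have "(SOME x. x \<in> gp_class E M w \<inter> gp_words M) \<in> gp_class E M w \<inter> gp_words M"
    by (rule someI)
  then show "(SOME x. x \<in> gp_class E M w \<inter> gp_words M) \<in> gp_words M"
    and "gp_eq E M w (SOME x. x \<in> gp_class E M w \<inter> gp_words M)"
    by (simp_all add: gp_class_def)
qed

lemma graph_product_mult_class:
  assumes "w \<in> gp_words M" "w' \<in> gp_words M"
  shows "gp_class E M w \<otimes>\<^bsub>graph_product E M\<^esub> gp_class E M w' = gp_class E M (w @ w')"
  using gp_eq_append[OF some_in_gp_class(2)[OF assms(1)] some_in_gp_class(2)[OF assms(2)]]
  by (simp add: graph_product_def gp_class_eq_iff gp_sym)

section \<open>Reduced words\<close>

lemma append_Cons_eq_append_pair_cases: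
  assumes "p @ x # q = P @ a # b # Q"
  shows "(\<exists>P'. P = p @ x # P' \<and> q = P' @ a # b # Q) \<or> (P = p \<and> x = a \<and> q = b # Q)
    \<or> (p = P @ [a] \<and> x = b \<and> q = Q) \<or> (\<exists>p'. p = P @ a # b # p' \<and> Q = p' @ x # q)"
  using assms
proof (induction p arbitrary: P)
  case Nil
  then show ?case
    by (cases P) auto
next
  case (Cons c p)
  then show ?case
    by (cases P; cases p) (auto simp: Cons_eq_append_conv)
qed

locale graph_product_words = sym_graph E for E :: "'v \<Rightarrow> 'v \<Rightarrow> bool" +
  fixes M :: "'v \<Rightarrow> ('a, 'c) monoid_scheme"
  assumes adjacent_irrefl: "\<not> E v v"
    and monoid_factor: "monoid (M v)"
begin

definition reduced :: "('v \<times> 'a) list \<Rightarrow> bool" where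
  "reduced w \<longleftrightarrow> w \<in> gp_words M \<and> (\<forall>l \<in> set w. snd l \<noteq> \<one>\<^bsub>M (fst l)\<^esub>)
     \<and> (\<forall>p v m n q. \<not> trace_eq E w (p @ (v, m) # (v, n) # q))"

definition starts_at :: "'v \<Rightarrow> ('v \<times> 'a) list \<Rightarrow> bool" where
  "starts_at v x \<longleftrightarrow> (\<exists>h y. trace_eq E x ((v, h) # y))"

definition cons_nonunit :: "'v \<Rightarrow> 'a \<Rightarrow> ('v \<times> 'a) list \<Rightarrow> ('v \<times> 'a) list" where
  "cons_nonunit v c y = (if c = \<one>\<^bsub>M v\<^esub> then y else (v, c) # y)"

text \<open>The chosen \<open>(h, y)\<close> is unique up to trace equivalence (\<open>trace_eq_same_head\<close>).\<close>

definition letter_act :: "'v \<times> 'a \<Rightarrow> ('v \<times> 'a) list \<Rightarrow> ('v \<times> 'a) list" where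
  "letter_act = (\<lambda>(v, g) x.
    if g \<notin> carrier (M v) then x
    else if starts_at v x then
      (case SOME (h, y). trace_eq E x ((v, h) # y) of (h, y) \<Rightarrow> cons_nonunit v (g \<otimes>\<^bsub>M v\<^esub> h) y)
    else cons_nonunit v g x)"

lemma reduced_letter:
  "reduced x \<Longrightarrow> (v, a) \<in> set x \<Longrightarrow> a \<in> carrier (M v) \<and> a \<noteq> \<one>\<^bsub>M v\<^esub>"
  unfolding reduced_def gp_words_iff by force

lemma reduced_Nil: "reduced []"
proof -
  have "\<forall>p v m n q. \<not> trace_eq E [] (p @ (v, m) # (v, n) # q)"
    by (auto dest: trace_eq_Nil)
  then show ?thesis
    unfolding reduced_def gp_words_iff by simp
qed

lemma reduced_trace_eq:
  assumes red: "reduced x" and tr: "trace_eq E x x'"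
  shows "reduced x'"
proof -
  have "\<not> trace_eq E x' (p @ (v, m) # (v, n) # q)" for p v m n q
  proof
    assume "trace_eq E x' (p @ (v, m) # (v, n) # q)"
    with red show False
      using trace_eq_trans[OF tr] unfolding reduced_def by blast
  qed
  then show ?thesis
    using red trace_eq_set[OF tr] unfolding reduced_def gp_words_iff by auto
qed

lemma reduced_ConsD:
  assumes "reduced (l # w)"
  shows "reduced w" and "\<not> starts_at (fst l) w"
proof -
  have "\<not> trace_eq E w (p @ (v, m) # (v, n) # q)" for p v m n q
  proof
    assume "trace_eq E w (p @ (v, m) # (v, n) # q)"
    then have "trace_eq E (l # w) ((l # p) @ (v, m) # (v, n) # q)"
      by (simp add: trace_eq_Cons)
    with assms show False
      unfolding reduced_def by blast
  qed
  then show "reduced w"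
    using assms unfolding reduced_def gp_words_iff by auto
  show "\<not> starts_at (fst l) w"
  proof
    assume "starts_at (fst l) w"
    then obtain h y where "trace_eq E w ((fst l, h) # y)"
      unfolding starts_at_def by blast
    then have "trace_eq E (l # w) ([] @ (fst l, snd l) # (fst l, h) # y)"
      using trace_eq_Cons by fastforce
    with assms show False
      unfolding reduced_def by blast
  qed
qed

lemma reduced_Cons:
  assumes red: "reduced y" and not_v: "\<not> starts_at v y"
    and g: "g \<in> carrier (M v)" "g \<noteq> \<one>\<^bsub>M v\<^esub>"
  shows "reduced ((v, g) # y)"
proof -
  have "\<not> trace_eq E ((v, g) # y) (P @ (a, m) # (a, n) # Q)" for P a m n Q
  proof
    assume "trace_eq E ((v, g) # y) (P @ (a, m) # (a, n) # Q)"
    then obtain p q where split: "P @ (a, m) # (a, n) # Q = p @ (v, g) # q"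
      and adj: "all_adjacent E v p" and pq: "trace_eq E y (p @ q)"
      by (auto elim: trace_eq_ConsE)
    from append_Cons_eq_append_pair_cases[OF split[symmetric]] show False
    proof (elim disjE exE conjE)
      fix P' assume "P = p @ (v, g) # P'" "q = P' @ (a, m) # (a, n) # Q"
      then have "trace_eq E y ((p @ P') @ (a, m) # (a, n) # Q)"
        using pq by simp
      then show False
        using red unfolding reduced_def by blast
    next
      assume "P = p" "(v, g) = (a, m)" "q = (a, n) # Q"
      then have "trace_eq E y (p @ (v, n) # Q)"
        using pq by simp
      also have "trace_eq E (p @ (v, n) # Q) ((v, n) # p @ Q)"
        using adj by (intro trace_eq_move_front) simp
      finally show False
        using not_v unfolding starts_at_def by blast
    next
      assume "p = P @ [(a, m)]" "(v, g) = (a, n)"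
      then show False
        using adj unfolding all_adjacent_def by auto
    next
      fix p' assume "p = P @ (a, m) # (a, n) # p'" "Q = p' @ (v, g) # q"
      then have "trace_eq E y (P @ (a, m) # (a, n) # p' @ q)"
        using pq by simp
      then show False
        using red unfolding reduced_def by blast
    qed
  qed
  then show ?thesis
    using red g unfolding reduced_def gp_words_iff by auto
qed

lemma cons_nonunit_trace_eq:
  "trace_eq E y y' \<Longrightarrow> trace_eq E (cons_nonunit v c y) (cons_nonunit v c y')"
  unfolding cons_nonunit_def by (auto intro: trace_eq_Cons)

lemma reduced_cons_nonunit:
  "reduced y \<Longrightarrow> \<not> starts_at v y \<Longrightarrow> c \<in> carrier (M v) \<Longrightarrow> reduced (cons_nonunit v c y)"
  unfolding cons_nonunit_def using reduced_Cons by auto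

lemma starts_at_trace_eq:
  assumes "trace_eq E x x'"
  shows "starts_at v x \<longleftrightarrow> starts_at v x'"
  using trace_eq_trans[OF assms] trace_eq_trans[OF trace_eq_sym[OF assms]]
  unfolding starts_at_def by blast

lemma starts_at_cons_nonunit:
  assumes "E u v"
  shows "starts_at u (cons_nonunit v c z) \<longleftrightarrow> starts_at u z"
proof (cases "c = \<one>\<^bsub>M v\<^esub>")
  case False
  have adj: "all_adjacent E u [(v, c)]"
    using assms adjacent_irrefl adjacent_sym by (auto simp: all_adjacent_def)
  show ?thesis
  proof
    assume "starts_at u (cons_nonunit v c z)"
    then obtain h y where "trace_eq E ((u, h) # y) ((v, c) # z)"
      using False trace_eq_sym unfolding starts_at_def cons_nonunit_def by fastforce
    then obtain p q where "(v, c) # z = p @ (u, h) # q" "all_adjacent E u p"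
      by (auto elim: trace_eq_ConsE)
    moreover have "u \<noteq> v"
      using assms adjacent_irrefl by blast
    ultimately obtain p' where "z = p' @ (u, h) # q" "all_adjacent E u p'"
      by (cases p) (auto simp: all_adjacent_def)
    then show "starts_at u z"
      unfolding starts_at_def using trace_eq_move_front by fastforce
  next
    assume "starts_at u z"
    then obtain h y where "trace_eq E z ((u, h) # y)"
      unfolding starts_at_def by blast
    then have "trace_eq E ((v, c) # z) ([(v, c)] @ (u, h) # y)"
      by (simp add: trace_eq_Cons)
    also have "trace_eq E ([(v, c)] @ (u, h) # y) ((u, h) # [(v, c)] @ y)"
      using adj by (intro trace_eq_move_front) simp
    finally show "starts_at u (cons_nonunit v c z)"
      using False unfolding starts_at_def cons_nonunit_def by auto
  qed
qed (simp add: cons_nonunit_def)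

lemma cons_nonunit_swap:
  assumes "E u v"
  shows "trace_eq E (cons_nonunit v c (cons_nonunit u d z)) (cons_nonunit u d (cons_nonunit v c z))"
proof -
  have "all_adjacent E u [(v, c)]"
    using assms adjacent_irrefl adjacent_sym by (auto simp: all_adjacent_def)
  then have "trace_eq E ([(v, c)] @ (u, d) # z) ((u, d) # [(v, c)] @ z)"
    by (intro trace_eq_move_front) simp
  then show ?thesis
    by (simp add: cons_nonunit_def)
qed

lemma letter_act_outside: "g \<notin> carrier (M v) \<Longrightarrow> letter_act (v, g) x = x"
  by (simp add: letter_act_def)

lemma letter_act_not_starts_at:
  "g \<in> carrier (M v) \<Longrightarrow> \<not> starts_at v x \<Longrightarrow> letter_act (v, g) x = cons_nonunit v g x"
  by (simp add: letter_act_def)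

lemma letter_act_starts_at:
  assumes g: "g \<in> carrier (M v)" and x: "trace_eq E x ((v, h) # y)"
  shows "trace_eq E (letter_act (v, g) x) (cons_nonunit v (g \<otimes>\<^bsub>M v\<^esub> h) y)"
proof -
  obtain h0 y0 where some: "(SOME (h, y). trace_eq E x ((v, h) # y)) = (h0, y0)"
    by fastforce
  have x0: "trace_eq E x ((v, h0) # y0)"
    using someI[of "\<lambda>(h, y). trace_eq E x ((v, h) # y)" "(h, y)"] x some by simp
  have "h0 = h" "trace_eq E y0 y"
    using trace_eq_same_head[OF x0 x] by simp_all
  moreover have "letter_act (v, g) x = cons_nonunit v (g \<otimes>\<^bsub>M v\<^esub> h0) y0"
    using g x some by (auto simp: letter_act_def starts_at_def)
  ultimately show ?thesis
    using cons_nonunit_trace_eq by simp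
qed

lemma letter_act_trace_eq:
  assumes "trace_eq E x x'"
  shows "trace_eq E (letter_act l x) (letter_act l x')"
proof -
  obtain v g where l: "l = (v, g)"
    by fastforce
  consider "g \<notin> carrier (M v)" | "g \<in> carrier (M v)" "starts_at v x"
    | "g \<in> carrier (M v)" "\<not> starts_at v x"
    by blast
  then show ?thesis
  proof cases
    case 2
    then obtain h y where x: "trace_eq E x ((v, h) # y)"
      unfolding starts_at_def by blast
    then have x': "trace_eq E x' ((v, h) # y)"
      using assms trace_eq_sym trace_eq_trans by blast
    have "trace_eq E (letter_act (v, g) x) (cons_nonunit v (g \<otimes>\<^bsub>M v\<^esub> h) y)"
      using letter_act_starts_at[OF \<open>g \<in> carrier (M v)\<close> x] .
    also have "trace_eq E \<dots> (letter_act (v, g) x')"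
      using letter_act_starts_at[OF \<open>g \<in> carrier (M v)\<close> x'] by (rule trace_eq_sym)
    finally show ?thesis
      using l by simp
  next
    case 3
    then show ?thesis
      using starts_at_trace_eq[OF assms] cons_nonunit_trace_eq[OF assms] l
      by (simp add: letter_act_not_starts_at)
  qed (use assms in \<open>simp add: l letter_act_outside\<close>)
qed

lemma letter_act_cons_nonunit:
  assumes c: "c \<in> carrier (M v)" and g: "g \<in> carrier (M v)" and not_v: "\<not> starts_at v y"
    and x: "trace_eq E x (cons_nonunit v c y)"
  shows "trace_eq E (letter_act (v, g) x) (cons_nonunit v (g \<otimes>\<^bsub>M v\<^esub> c) y)"
proof -
  have "trace_eq E (letter_act (v, g) (cons_nonunit v c y)) (cons_nonunit v (g \<otimes>\<^bsub>M v\<^esub> c) y)"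
  proof (cases "c = \<one>\<^bsub>M v\<^esub>")
    case True
    then show ?thesis
      using letter_act_not_starts_at[OF g not_v] monoid.r_one[OF monoid_factor g]
      by (simp add: cons_nonunit_def)
  next
    case False
    then show ?thesis
      using letter_act_starts_at[OF g, of "(v, c) # y" c y] by (simp add: cons_nonunit_def)
  qed
  with letter_act_trace_eq[OF x] show ?thesis
    by (rule trace_eq_trans)
qed

lemma reduced_decompose:
  assumes "reduced x"
  obtains c y where "c \<in> carrier (M v)" "reduced y" "\<not> starts_at v y"
    "trace_eq E x (cons_nonunit v c y)"
proof (cases "starts_at v x")
  case True
  then obtain h y where x: "trace_eq E x ((v, h) # y)"
    unfolding starts_at_def by blast
  then have red: "reduced ((v, h) # y)"
    using reduced_trace_eq assms by blast
  then have "h \<in> carrier (M v)" "h \<noteq> \<one>\<^bsub>M v\<^esub>"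
    using reduced_letter by auto
  with red x that show ?thesis
    using reduced_ConsD[OF red] by (simp add: cons_nonunit_def)
next
  case False
  with assms show ?thesis
    using that[OF monoid.one_closed[OF monoid_factor]] by (simp add: cons_nonunit_def)
qed

lemma letter_act_reduced: "reduced x \<Longrightarrow> reduced (letter_act l x)"
proof -
  assume red: "reduced x"
  obtain v g where l: "l = (v, g)"
    by fastforce
  show ?thesis
  proof (cases "g \<in> carrier (M v)")
    case True
    obtain c y where c: "c \<in> carrier (M v)" "reduced y" "\<not> starts_at v y"
        and x: "trace_eq E x (cons_nonunit v c y)"
      using reduced_decompose[OF red] by blast
    have "reduced (cons_nonunit v (g \<otimes>\<^bsub>M v\<^esub> c) y)"
      using reduced_cons_nonunit c True monoid.m_closed[OF monoid_factor] by blast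
    then show ?thesis
      using reduced_trace_eq trace_eq_sym letter_act_cons_nonunit[OF c(1) True c(3) x] l by blast
  qed (simp add: red l letter_act_outside)
qed

lemma letter_act_one:
  assumes "reduced x"
  shows "trace_eq E (letter_act (v, \<one>\<^bsub>M v\<^esub>) x) x"
proof -
  obtain c y where c: "c \<in> carrier (M v)" "\<not> starts_at v y"
      and x: "trace_eq E x (cons_nonunit v c y)"
    using reduced_decompose[OF assms] by blast
  have "trace_eq E (letter_act (v, \<one>\<^bsub>M v\<^esub>) x) (cons_nonunit v (\<one>\<^bsub>M v\<^esub> \<otimes>\<^bsub>M v\<^esub> c) y)"
    using letter_act_cons_nonunit[OF c(1) monoid.one_closed[OF monoid_factor] c(2) x] .
  then show ?thesis
    using monoid.l_one[OF monoid_factor c(1)] trace_eq_trans trace_eq_sym[OF x] by simp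
qed

lemma letter_act_mult:
  assumes "reduced x" and m: "m \<in> carrier (M v)" and n: "n \<in> carrier (M v)"
  shows "trace_eq E (letter_act (v, m) (letter_act (v, n) x)) (letter_act (v, m \<otimes>\<^bsub>M v\<^esub> n) x)"
proof -
  obtain c y where c: "c \<in> carrier (M v)" "\<not> starts_at v y"
      and x: "trace_eq E x (cons_nonunit v c y)"
    using reduced_decompose[OF assms(1)] by blast
  have nc: "n \<otimes>\<^bsub>M v\<^esub> c \<in> carrier (M v)" and mn: "m \<otimes>\<^bsub>M v\<^esub> n \<in> carrier (M v)"
    using monoid.m_closed[OF monoid_factor] m n c(1) by blast+
  have "trace_eq E (letter_act (v, m) (letter_act (v, n) x))
      (cons_nonunit v (m \<otimes>\<^bsub>M v\<^esub> (n \<otimes>\<^bsub>M v\<^esub> c)) y)"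
    using letter_act_cons_nonunit[OF nc m c(2) letter_act_cons_nonunit[OF c(1) n c(2) x]] .
  moreover have "trace_eq E (letter_act (v, m \<otimes>\<^bsub>M v\<^esub> n) x)
      (cons_nonunit v ((m \<otimes>\<^bsub>M v\<^esub> n) \<otimes>\<^bsub>M v\<^esub> c) y)"
    using letter_act_cons_nonunit[OF c(1) mn c(2) x] .
  ultimately show ?thesis
    using monoid.m_assoc[OF monoid_factor m n c(1)] trace_eq_trans[OF _ trace_eq_sym] by simp
qed

lemma letter_act_commute:
  assumes "reduced x" and uv: "E u v" and m: "m \<in> carrier (M u)" and n: "n \<in> carrier (M v)"
  shows "trace_eq E (letter_act (u, m) (letter_act (v, n) x))
    (letter_act (v, n) (letter_act (u, m) x))"
proof -
  \<comment> \<open>decompose \<open>x\<close> at \<open>v\<close> and then at \<open>u\<close>: both sides multiply into independent, commuting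
    \<open>u\<close>- and \<open>v\<close>-letters\<close>
  obtain c y where c: "c \<in> carrier (M v)" "reduced y" "\<not> starts_at v y"
      and x: "trace_eq E x (cons_nonunit v c y)"
    using reduced_decompose[OF assms(1)] by blast
  obtain d z where d: "d \<in> carrier (M u)" "\<not> starts_at u z"
      and y: "trace_eq E y (cons_nonunit u d z)"
    using reduced_decompose[OF c(2)] by blast
  have vu: "E v u"
    using adjacent_sym[OF uv] .
  have not_v: "\<not> starts_at v (cons_nonunit u e z)" for e
    using c(3) starts_at_trace_eq[OF y] starts_at_cons_nonunit[OF vu] by simp
  have not_u: "\<not> starts_at u (cons_nonunit v e z)" for e
    using d(2) starts_at_cons_nonunit[OF uv] by simp
  have nc: "n \<otimes>\<^bsub>M v\<^esub> c \<in> carrier (M v)" and md: "m \<otimes>\<^bsub>M u\<^esub> d \<in> carrier (M u)"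
    using monoid.m_closed[OF monoid_factor] m n c(1) d(1) by blast+
  have x_vu: "trace_eq E x (cons_nonunit v c (cons_nonunit u d z))"
    using x cons_nonunit_trace_eq[OF y] by (rule trace_eq_trans)
  have "trace_eq E (letter_act (v, n) x) (cons_nonunit v (n \<otimes>\<^bsub>M v\<^esub> c) (cons_nonunit u d z))"
    by (rule letter_act_cons_nonunit[OF c(1) n not_v x_vu])
  also have "trace_eq E \<dots> (cons_nonunit u d (cons_nonunit v (n \<otimes>\<^bsub>M v\<^esub> c) z))"
    by (rule cons_nonunit_swap[OF uv])
  finally have lhs: "trace_eq E (letter_act (u, m) (letter_act (v, n) x))
      (cons_nonunit u (m \<otimes>\<^bsub>M u\<^esub> d) (cons_nonunit v (n \<otimes>\<^bsub>M v\<^esub> c) z))"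
    by (rule letter_act_cons_nonunit[OF d(1) m not_u])
  have "trace_eq E x (cons_nonunit u d (cons_nonunit v c z))"
    using x_vu cons_nonunit_swap[OF uv] by (rule trace_eq_trans)
  then have "trace_eq E (letter_act (u, m) x) (cons_nonunit u (m \<otimes>\<^bsub>M u\<^esub> d) (cons_nonunit v c z))"
    by (rule letter_act_cons_nonunit[OF d(1) m not_u])
  also have "trace_eq E \<dots> (cons_nonunit v c (cons_nonunit u (m \<otimes>\<^bsub>M u\<^esub> d) z))"
    using cons_nonunit_swap[OF uv] by (rule trace_eq_sym)
  finally have "trace_eq E (letter_act (v, n) (letter_act (u, m) x))
      (cons_nonunit v (n \<otimes>\<^bsub>M v\<^esub> c) (cons_nonunit u (m \<otimes>\<^bsub>M u\<^esub> d) z))"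
    by (rule letter_act_cons_nonunit[OF c(1) n not_v])
  also have "trace_eq E \<dots> (cons_nonunit u (m \<otimes>\<^bsub>M u\<^esub> d) (cons_nonunit v (n \<otimes>\<^bsub>M v\<^esub> c) z))"
    by (rule cons_nonunit_swap[OF uv])
  finally show ?thesis
    using lhs trace_eq_trans[OF _ trace_eq_sym] by blast
qed

lemma foldr_letter_act_reduced: "reduced x \<Longrightarrow> reduced (foldr letter_act w x)"
  by (induction w) (auto intro: letter_act_reduced)

lemma foldr_letter_act_trace_eq:
  "trace_eq E x x' \<Longrightarrow> trace_eq E (foldr letter_act w x) (foldr letter_act w x')"
  by (induction w) (auto intro: letter_act_trace_eq)

lemma gp_eq_imp_act_trace_eq:
  "gp_eq E M w w' \<Longrightarrow> reduced x \<Longrightarrow> trace_eq E (foldr letter_act w x) (foldr letter_act w' x)"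
proof (induction arbitrary: x rule: gp_eq.induct)
  case (gp_sym w w')
  then show ?case
    using trace_eq_sym by blast
next
  case (gp_trans w w' w'')
  then show ?case
    using trace_eq_trans by blast
next
  case (gp_ctxt w w' a b)
  then show ?case
    using foldr_letter_act_reduced foldr_letter_act_trace_eq by simp
next
  case (gp_unit v)
  then show ?case
    using letter_act_one by simp
next
  case (gp_mult m v n)
  then show ?case
    using letter_act_mult by simp
next
  case (gp_comm u v m n)
  then show ?case
    using letter_act_commute by simp
qed simp

lemma reduced_act_Nil: "reduced w \<Longrightarrow> trace_eq E (foldr letter_act w []) w"
proof (induction w)
  case (Cons l w)
  obtain v g where l: "l = (v, g)"
    by fastforce
  have red: "reduced w" and not_v: "\<not> starts_at v w"
    using reduced_ConsD[OF Cons.prems] l by auto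
  have "g \<in> carrier (M v)" "g \<noteq> \<one>\<^bsub>M v\<^esub>"
    using reduced_letter[OF Cons.prems] l by auto
  then have "letter_act (v, g) w = (v, g) # w"
    using letter_act_not_starts_at not_v by (simp add: cons_nonunit_def)
  then show ?case
    using letter_act_trace_eq[OF Cons.IH[OF red], of l] l by simp
qed simp

theorem reduced_gp_eq_imp_trace_eq:
  assumes "reduced w" "reduced w'" "gp_eq E M w w'"
  shows "trace_eq E w w'"
proof -
  have "trace_eq E w (foldr letter_act w [])"
    using reduced_act_Nil[OF assms(1)] by (rule trace_eq_sym)
  also have "trace_eq E \<dots> (foldr letter_act w' [])"
    using gp_eq_imp_act_trace_eq[OF assms(3) reduced_Nil] .
  also have "trace_eq E \<dots> w'"
    using reduced_act_Nil[OF assms(2)] .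
  finally show ?thesis .
qed

lemma nonreduced_shorten:
  assumes w: "w \<in> gp_words M" and "\<not> reduced w"
  obtains w' where "w' \<in> gp_words M" "length w' < length w" "gp_eq E M w w'"
proof (cases "\<exists>l \<in> set w. snd l = \<one>\<^bsub>M (fst l)\<^esub>")
  case True
  then obtain l where "l \<in> set w" and unit: "snd l = \<one>\<^bsub>M (fst l)\<^esub>"
    by blast
  then obtain p q where "w = p @ l # q"
    by (meson split_list)
  with unit obtain v where w_eq: "w = p @ (v, \<one>\<^bsub>M v\<^esub>) # q"
    by (metis prod.collapse)
  have "gp_eq E M (p @ [(v, \<one>\<^bsub>M v\<^esub>)] @ q) (p @ [] @ q)"
    by (intro gp_ctxt gp_unit)
  with w w_eq show ?thesis
    using that[of "p @ q"] by (auto simp: gp_words_iff)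
next
  case False
  then obtain p v m n q where tr: "trace_eq E w (p @ (v, m) # (v, n) # q)"
    using assms unfolding reduced_def by blast
  have same_set: "set (p @ (v, m) # (v, n) # q) = set w"
    using trace_eq_set[OF tr] by simp
  then have "(v, m) \<in> set w" "(v, n) \<in> set w"
    by auto
  then have mn: "m \<in> carrier (M v)" "n \<in> carrier (M v)"
    using w by (force simp: gp_words_iff)+
  have "gp_eq E M w (p @ [(v, m), (v, n)] @ q)"
    using trace_eq_imp_gp_eq[OF w tr] by simp
  also have "gp_eq E M \<dots> (p @ [(v, m \<otimes>\<^bsub>M v\<^esub> n)] @ q)"
    by (intro gp_ctxt gp_mult mn)
  finally have "gp_eq E M w (p @ [(v, m \<otimes>\<^bsub>M v\<^esub> n)] @ q)" .
  moreover have "p @ [(v, m \<otimes>\<^bsub>M v\<^esub> n)] @ q \<in> gp_words M"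
    using w same_set monoid.m_closed[OF monoid_factor mn] by (auto simp: gp_words_iff)
  moreover have "length (p @ [(v, m \<otimes>\<^bsub>M v\<^esub> n)] @ q) < length w"
    using trace_eq_length[OF tr] by simp
  ultimately show ?thesis
    using that by blast
qed

lemma exists_reduced: "w \<in> gp_words M \<Longrightarrow> \<exists>r. reduced r \<and> gp_eq E M w r"
proof (induction "length w" arbitrary: w rule: less_induct)
  case less
  show ?case
  proof (cases "reduced w")
    case False
    then obtain w' where "w' \<in> gp_words M" "length w' < length w" and w': "gp_eq E M w w'"
      using nonreduced_shorten[OF less.prems] by blast
    then obtain r where "reduced r" "gp_eq E M w' r"
      using less.hyps by blast
    with w' show ?thesis
      using gp_trans by blast
  qed (use gp_refl in blast)
qed

end

section \<open>Letterwise homomorphisms\<close>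

definition map_letters :: "('v \<Rightarrow> 'a \<Rightarrow> 'b) \<Rightarrow> ('v \<times> 'a) list \<Rightarrow> ('v \<times> 'b) list" where
  "map_letters f = map (\<lambda>(v, a). (v, f v a))"

lemma inj_on_map_letters:
  assumes "\<And>v. inj_on (f v) (carrier (M v))"
  shows "inj_on (map_letters f) (gp_words M)"
proof -
  have "gp_words M = lists (SIGMA v:UNIV. carrier (M v))"
    by (auto simp: gp_words_def)
  moreover have "inj_on (\<lambda>(v, a). (v, f v a)) (SIGMA v:UNIV. carrier (M v))"
    using assms by (auto simp: inj_on_def)
  ultimately show ?thesis
    unfolding map_letters_def by (simp add: inj_on_map_lists)
qed

context sym_graph
begin

lemma trace_eq_map_letters_lift:
  "trace_eq E (map_letters f r) w \<Longrightarrow> \<exists>s. w = map_letters f s \<and> trace_eq E r s"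
  unfolding map_letters_def by (rule trace_eq_map_lift) (simp split: prod.split)

lemma trace_eq_map_lettersD:
  assumes inj: "\<And>v. inj_on (f v) (carrier (M v))" and r: "r \<in> gp_words M" "r' \<in> gp_words M"
    and tr: "trace_eq E (map_letters f r) (map_letters f r')"
  shows "trace_eq E r r'"
proof -
  obtain s where s: "map_letters f r' = map_letters f s" "trace_eq E r s"
    using trace_eq_map_letters_lift[OF tr] by blast
  have "s \<in> gp_words M"
    using r(1) trace_eq_set[OF s(2)] by (simp add: gp_words_iff)
  then have "r' = s"
    using inj_onD[OF inj_on_map_letters[OF inj] s(1) r(2)] by blast
  with s(2) show ?thesis
    by simp
qed

end

definition graph_product_map :: "('v \<Rightarrow> 'v \<Rightarrow> bool) \<Rightarrow> ('v \<Rightarrow> ('a, 'c) monoid_scheme)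
    \<Rightarrow> ('v \<Rightarrow> ('b, 'd) monoid_scheme) \<Rightarrow> ('v \<Rightarrow> 'a \<Rightarrow> 'b)
    \<Rightarrow> ('v \<times> 'a) list set \<Rightarrow> ('v \<times> 'b) list set" where
  "graph_product_map E M N f X = gp_class E N (map_letters f (SOME w. w \<in> X \<inter> gp_words M))"

locale letterwise_hom =
  fixes E :: "'v \<Rightarrow> 'v \<Rightarrow> bool" and M :: "'v \<Rightarrow> ('a, 'c) monoid_scheme"
    and N :: "'v \<Rightarrow> ('b, 'd) monoid_scheme" and f :: "'v \<Rightarrow> 'a \<Rightarrow> 'b"
  assumes factor_hom: "f v \<in> hom (M v) (N v)"
    and factor_one: "f v \<one>\<^bsub>M v\<^esub> = \<one>\<^bsub>N v\<^esub>"
begin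

lemma factor_closed: "a \<in> carrier (M v) \<Longrightarrow> f v a \<in> carrier (N v)"
  using hom_in_carrier[OF factor_hom] .

lemma map_letters_gp_words: "w \<in> gp_words M \<Longrightarrow> map_letters f w \<in> gp_words N"
  by (auto simp: gp_words_iff map_letters_def factor_closed)

lemma gp_eq_map_letters: "gp_eq E M w w' \<Longrightarrow> gp_eq E N (map_letters f w) (map_letters f w')"
proof (induction rule: gp_eq.induct)
  case (gp_sym w w')
  show ?case
    by (rule gp_eq.gp_sym[OF gp_sym.IH])
next
  case (gp_trans w w' w'')
  show ?case
    by (rule gp_eq.gp_trans[OF gp_trans.IH])
next
  case (gp_ctxt w w' a b)
  show ?case
    using gp_eq.gp_ctxt[OF gp_ctxt.IH] by (simp add: map_letters_def)
next
  case (gp_unit v)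
  show ?case
    by (simp add: map_letters_def factor_one gp_eq.gp_unit)
next
  case (gp_mult m v n)
  then have "gp_eq E N [(v, f v m), (v, f v n)] [(v, f v m \<otimes>\<^bsub>N v\<^esub> f v n)]"
    by (intro gp_eq.gp_mult factor_closed)
  with gp_mult show ?case
    by (simp add: map_letters_def hom_mult[OF factor_hom])
next
  case (gp_comm u v m n)
  then have "gp_eq E N [(u, f u m), (v, f v n)] [(v, f v n), (u, f u m)]"
    by (intro gp_eq.gp_comm factor_closed)
  then show ?case
    by (simp add: map_letters_def)
qed (rule gp_refl)

lemma graph_product_map_class:
  assumes "w \<in> gp_words M"
  shows "graph_product_map E M N f (gp_class E M w) = gp_class E N (map_letters f w)"
  using gp_eq_map_letters[OF some_in_gp_class(2)[OF assms]]
  by (simp add: graph_product_map_def gp_class_eq_iff gp_sym)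

lemma graph_product_map_hom:
  "graph_product_map E M N f \<in> hom (graph_product E M) (graph_product E N)"
proof -
  have "graph_product_map E M N f X \<in> carrier (graph_product E N)"
    if "X \<in> carrier (graph_product E M)" for X
    using that graph_product_map_class map_letters_gp_words by (auto simp: graph_product_def)
  moreover have "graph_product_map E M N f (X \<otimes>\<^bsub>graph_product E M\<^esub> Y)
      = graph_product_map E M N f X \<otimes>\<^bsub>graph_product E N\<^esub> graph_product_map E M N f Y"
    if X: "X \<in> carrier (graph_product E M)" and Y: "Y \<in> carrier (graph_product E M)" for X Y
  proof -
    obtain w w' where w: "w \<in> gp_words M" "X = gp_class E M w"
        and w': "w' \<in> gp_words M" "Y = gp_class E M w'"
      using X Y by (auto simp: graph_product_def)
    moreover have "w @ w' \<in> gp_words M"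
      using w(1) w'(1) by (auto simp: gp_words_iff)
    ultimately show ?thesis
      using map_letters_gp_words
      by (simp add: graph_product_mult_class graph_product_map_class map_letters_def)
  qed
  ultimately show ?thesis
    unfolding hom_def by blast
qed

lemma graph_product_map_one:
  "graph_product_map E M N f \<one>\<^bsub>graph_product E M\<^esub> = \<one>\<^bsub>graph_product E N\<^esub>"
  using graph_product_map_class[of "[]"] by (simp add: graph_product_def gp_words_def map_letters_def)

end

section \<open>Embeddings of graph products\<close>

locale letterwise_embedding =
  letterwise_hom E M N f + M: graph_product_words E M + N: graph_product_words E N
  for E :: "'v \<Rightarrow> 'v \<Rightarrow> bool" and M :: "'v \<Rightarrow> ('a, 'c) monoid_scheme"
    and N :: "'v \<Rightarrow> ('b, 'd) monoid_scheme" and f :: "'v \<Rightarrow> 'a \<Rightarrow> 'b" +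
  assumes factor_inj: "inj_on (f v) (carrier (M v))"
begin

lemma reduced_map_letters:
  assumes red: "M.reduced r"
  shows "N.reduced (map_letters f r)"
proof -
  have words: "map_letters f r \<in> gp_words N"
    using red map_letters_gp_words unfolding M.reduced_def by blast
  have nonunit: "snd l \<noteq> \<one>\<^bsub>N (fst l)\<^esub>" if l_in: "l \<in> set (map_letters f r)" for l
  proof -
    obtain v a where "(v, a) \<in> set r" and l: "l = (v, f v a)"
      using l_in by (auto simp: map_letters_def)
    then have "a \<in> carrier (M v)" "a \<noteq> \<one>\<^bsub>M v\<^esub>"
      using M.reduced_letter[OF red] by auto
    then have "f v a \<noteq> f v \<one>\<^bsub>M v\<^esub>"
      using inj_onD[OF factor_inj] monoid.one_closed[OF M.monoid_factor] by metis
    with l show ?thesis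
      by (simp add: factor_one)
  qed
  have "\<not> trace_eq E (map_letters f r) (p @ (v, m) # (v, n) # q)" for p v m n q
  proof
    assume "trace_eq E (map_letters f r) (p @ (v, m) # (v, n) # q)"
    then obtain s where s: "p @ (v, m) # (v, n) # q = map_letters f s" "trace_eq E r s"
      using M.trace_eq_map_letters_lift by blast
    then obtain s1 a b s2 where "s = s1 @ (v, a) # (v, b) # s2"
      by (auto simp: map_letters_def append_eq_map_conv Cons_eq_map_conv split: prod.splits)
    with s(2) red show False
      unfolding M.reduced_def by blast
  qed
  with words nonunit show ?thesis
    unfolding N.reduced_def by blast
qed

lemma gp_eq_map_lettersD:
  assumes w: "w \<in> gp_words M" "w' \<in> gp_words M"
    and eq: "gp_eq E N (map_letters f w) (map_letters f w')"
  shows "gp_eq E M w w'"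
proof -
  obtain r r' where r: "M.reduced r" "gp_eq E M w r" and r': "M.reduced r'" "gp_eq E M w' r'"
    using M.exists_reduced w by blast
  have "gp_eq E N (map_letters f r) (map_letters f w)"
    using gp_eq_map_letters[OF r(2)] by (rule gp_sym)
  also note eq
  also have "gp_eq E N (map_letters f w') (map_letters f r')"
    using gp_eq_map_letters[OF r'(2)] .
  finally have "trace_eq E (map_letters f r) (map_letters f r')"
    using N.reduced_gp_eq_imp_trace_eq reduced_map_letters r(1) r'(1) by blast
  with r(1) r'(1) have "trace_eq E r r'"
    by (intro M.trace_eq_map_lettersD[where f = f and M = M])
      (simp_all add: factor_inj M.reduced_def)
  then have "gp_eq E M r r'"
    using M.trace_eq_imp_gp_eq r(1) unfolding M.reduced_def by blast
  with r(2) r'(2) show ?thesis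
    using gp_sym gp_trans by meson
qed

theorem monoid_embedding_graph_product_map:
  "monoid_embedding (graph_product E M) (graph_product E N) (graph_product_map E M N f)"
proof -
  have "inj_on (graph_product_map E M N f) (carrier (graph_product E M))"
  proof (rule inj_onI)
    fix X Y
    assume "X \<in> carrier (graph_product E M)" "Y \<in> carrier (graph_product E M)"
      and eq: "graph_product_map E M N f X = graph_product_map E M N f Y"
    then obtain w w' where w: "w \<in> gp_words M" "X = gp_class E M w"
        and w': "w' \<in> gp_words M" "Y = gp_class E M w'"
      by (auto simp: graph_product_def)
    with eq have "gp_class E N (map_letters f w) = gp_class E N (map_letters f w')"
      by (simp add: graph_product_map_class)
    with w w' show "X = Y"
      using gp_eq_map_lettersD by (simp add: gp_class_eq_iff)
  qed
  then show ?thesis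
    using graph_product_map_hom graph_product_map_one
    unfolding monoid_embedding_def mon_def by blast
qed

end

theorem embeddable_graph_product:
  assumes "\<And>u v. E u v \<Longrightarrow> E v u" and "\<And>v. \<not> E v v"
    and "\<And>v. monoid (M v)" and "\<And>v. monoid (N v)"
    and "\<And>v. embeddable (M v) (N v)"
  shows "embeddable (graph_product E M) (graph_product E N)"
proof -
  obtain f where "\<And>v. monoid_embedding (M v) (N v) (f v)"
    using assms(5) unfolding embeddable_def by metis
  with assms interpret letterwise_embedding E M N f
    by (simp add: letterwise_embedding_def letterwise_embedding_axioms_def letterwise_hom_def
        graph_product_words_def graph_product_words_axioms_def sym_graph_def
        monoid_embedding_def mon_def)
  show ?thesis
    using monoid_embedding_graph_product_map unfolding embeddable_def by blast
qed

theorem corollary1p8: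
  fixes E :: "'v \<Rightarrow> 'v \<Rightarrow> bool"
    and M :: "'v \<Rightarrow> 'a monoid"
    and G :: "'v \<Rightarrow> 'b monoid"
  assumes "\<And>u v. E u v \<Longrightarrow> E v u"
    and "\<And>v. \<not> E v v"
    and "\<And>v. monoid (M v)"
    and "\<And>v. group (G v)"
    and "\<And>v. embeddable (M v) (G v)"
  shows "embeddable (graph_product E M) (graph_product E G)"
  using embeddable_graph_product[OF assms(1-3) group.is_monoid[OF assms(4)] assms(5)] .

end
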